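(* For every integer $s \geq 1$, $$\mathsf {Brac}_{3,s}\cap \{\alpha_3=\beta_2=0\}=\left\{ \big( (\alpha_1, 1-\alpha_1, 0), (\beta_1, 0, 1-\beta_1) \big) \, : \, \alpha_1,\beta_1\in[0,1],\ \lceil \alpha_1 s\rceil + \lceil \beta_1 s\rceil \leq s \right\},$$ where $\{\alpha_3=\beta_2=0\}$ denotes the set of pairs $(\alpha,\beta)\in\Delta_3^2$ with $\alpha_3=0$ and $\beta_2=0$.
   Context: $\Delta_d=\{\alpha\in\mathbb R^d:\alpha_i\ge0,\ \sum_i\alpha_i=1\}$. For $s\ge1$, $\mathsf{Brac}_{d,s}$ is the set of $(\alpha,\beta)\in\Delta_d^2$ for which there exist $A_1,\dots,A_d,B_1,\dots,B_d\in M_s(\mathbb C)$ with $\sum_i A_iA_i^*=\sum_iB_iB_i^*=I_s$, $\sum_iA_iB_i^*=0$, and $\tfrac1s\|A_i\|_F^2=\alpha_i$, $\tfrac1s\|B_i\|_F^2=\beta_i$ for all $i$, where $\|X\|_F=\operatorname{Tr}(XX^* )^{1/2}$. *)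

theory Defs
  imports Complex_Main
begin

text \<open>Vectors in R^d are functions nat => real indexed by 1..d, vanishing outside 1..d.
  Complex s x s matrices are functions nat => nat => complex, entries indexed by 0..s-1
  (entries outside this range are irrelevant).\<close>

definition simplex :: "nat \<Rightarrow> (nat \<Rightarrow> real) set" where
  "simplex d = {a. (\<forall>i\<in>{1..d}. a i \<ge> 0) \<and> (\<forall>i. i \<notin> {1..d} \<longrightarrow> a i = 0)
                   \<and> (\<Sum>i=1..d. a i) = 1}"

definition mul_adj :: "nat \<Rightarrow> (nat \<Rightarrow> nat \<Rightarrow> complex) \<Rightarrow> (nat \<Rightarrow> nat \<Rightarrow> complex) \<Rightarrow> nat \<Rightarrow> nat \<Rightarrow> complex" where
  "mul_adj s X Y j l = (\<Sum>k<s. X j k * cnj (Y l k))"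

definition frob_sq :: "nat \<Rightarrow> (nat \<Rightarrow> nat \<Rightarrow> complex) \<Rightarrow> real" where
  "frob_sq s X = (\<Sum>j<s. \<Sum>k<s. (cmod (X j k))\<^sup>2)"

definition Brac :: "nat \<Rightarrow> nat \<Rightarrow> ((nat \<Rightarrow> real) \<times> (nat \<Rightarrow> real)) set" where
  "Brac d s = {(\<alpha>, \<beta>). \<alpha> \<in> simplex d \<and> \<beta> \<in> simplex d \<and>
     (\<exists>A B :: nat \<Rightarrow> nat \<Rightarrow> nat \<Rightarrow> complex.
        (\<forall>j<s. \<forall>l<s. (\<Sum>i=1..d. mul_adj s (A i) (A i) j l) = (if j = l then 1 else 0)) \<and>
        (\<forall>j<s. \<forall>l<s. (\<Sum>i=1..d. mul_adj s (B i) (B i) j l) = (if j = l then 1 else 0)) \<and>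
        (\<forall>j<s. \<forall>l<s. (\<Sum>i=1..d. mul_adj s (A i) (B i) j l) = 0) \<and>
        (\<forall>i\<in>{1..d}. frob_sq s (A i) / real s = \<alpha> i \<and> frob_sq s (B i) / real s = \<beta> i))}"

definition vec3 :: "real \<Rightarrow> real \<Rightarrow> real \<Rightarrow> nat \<Rightarrow> real" where
  "vec3 a b c = (\<lambda>i. if i = 1 then a else if i = 2 then b else if i = 3 then c else 0)"

end

theory Submission
  imports Defs
begin

(* If alpha_3 = beta_2 = 0, the Frobenius constraints force A_3 = 0 and B_2 = 0, so the
   orthogonality relation collapses to A_1 B_1^* = 0: the row spaces of A_1 and B_1 are
   orthogonal, of dimensions p and q with p + q <= s. Since sum_i A_i A_i^* = I, every A_i
   is a contraction, hence ||A_1||_F^2 <= rank A_1 = p (expand the rows in an orthonormal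
   basis of the row space), and likewise ||B_1||_F^2 <= q. As p and q are integers,
   ceil(alpha_1 s) + ceil(beta_1 s) <= p + q <= s.
   Conversely diagonal matrices suffice: spread alpha_1 s evenly over the first
   p = ceil(alpha_1 s) diagonal entries of A_1^2 and beta_1 s over the next
   q = ceil(beta_1 s) entries of B_1^2, and complete by A_2 = (I - A_1^2)^(1/2) and
   B_3 = (I - B_1^2)^(1/2). *)

section \<open>Inner product on the first s coordinates\<close>

definition cinner :: "nat \<Rightarrow> (nat \<Rightarrow> complex) \<Rightarrow> (nat \<Rightarrow> complex) \<Rightarrow> complex" where
  "cinner s x y = (\<Sum>k<s. x k * cnj (y k))"

definition sqnorm :: "nat \<Rightarrow> (nat \<Rightarrow> complex) \<Rightarrow> real" where
  "sqnorm s x = (\<Sum>k<s. (cmod (x k))\<^sup>2)"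

definition orthonormal :: "nat \<Rightarrow> (nat \<Rightarrow> complex) set \<Rightarrow> bool" where
  "orthonormal s E \<longleftrightarrow> (\<forall>e\<in>E. \<forall>e'\<in>E. cinner s e e' = (if e = e' then 1 else 0))"

definition orth_compl :: "nat \<Rightarrow> (nat \<Rightarrow> complex) set \<Rightarrow> (nat \<Rightarrow> complex) set" where
  "orth_compl s X = {v. \<forall>x\<in>X. cinner s x v = 0}"

definition orth_proj :: "nat \<Rightarrow> (nat \<Rightarrow> complex) set \<Rightarrow> (nat \<Rightarrow> complex) \<Rightarrow> nat \<Rightarrow> complex" where
  "orth_proj s E x = (\<lambda>k. \<Sum>e\<in>E. cinner s x e * e k)"

definition expands :: "nat \<Rightarrow> (nat \<Rightarrow> complex) set \<Rightarrow> (nat \<Rightarrow> complex) \<Rightarrow> bool" where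
  "expands s E x \<longleftrightarrow> (\<forall>k<s. x k = orth_proj s E x k)"

lemma cinner_commute: "cinner s y x = cnj (cinner s x y)"
  unfolding cinner_def by (simp add: mult.commute)

lemma cinner_self: "cinner s x x = of_real (sqnorm s x)"
  unfolding cinner_def sqnorm_def of_real_sum
  by (intro sum.cong) (auto simp: complex_norm_square[symmetric])

lemma sqnorm_nonneg: "0 \<le> sqnorm s x"
  unfolding sqnorm_def by (simp add: sum_nonneg)

lemma sqnorm_eq_0_iff: "sqnorm s x = 0 \<longleftrightarrow> (\<forall>k<s. x k = 0)"
  unfolding sqnorm_def by (subst sum_nonneg_eq_0_iff) auto

lemma cinner_cong: "(\<And>k. k < s \<Longrightarrow> x k = x' k) \<Longrightarrow> cinner s x v = cinner s x' v"
  unfolding cinner_def by simp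

lemma cinner_sum_left:
  "finite J \<Longrightarrow> cinner s (\<lambda>k. \<Sum>j\<in>J. c j * f j k) v = (\<Sum>j\<in>J. c j * cinner s (f j) v)"
  unfolding cinner_def by (simp add: sum_distrib_left sum_distrib_right mult.assoc sum.swap[of _ J])

lemma cinner_diff_left: "cinner s (\<lambda>k. x k - y k) v = cinner s x v - cinner s y v"
  unfolding cinner_def by (simp add: algebra_simps sum_subtractf)

lemma cinner_diff_right: "cinner s v (\<lambda>k. x k - y k) = cinner s v x - cinner s v y"
  unfolding cinner_def by (simp add: algebra_simps sum_subtractf)

lemma cinner_divide_left: "cinner s (\<lambda>k. x k / a) v = cinner s x v / a"
  unfolding cinner_def by (simp add: sum_divide_distrib)

lemma cinner_divide_right_real:
  "cinner s v (\<lambda>k. x k / complex_of_real a) = cinner s v x / complex_of_real a"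
  unfolding cinner_def by (simp add: sum_divide_distrib)

lemma cinner_orth_proj:
  "finite E \<Longrightarrow> cinner s (orth_proj s E x) v = (\<Sum>e\<in>E. cinner s x e * cinner s e v)"
  unfolding orth_proj_def by (rule cinner_sum_left)

lemma orthonormal_sum_cinner:
  assumes "finite E" "orthonormal s E" "e \<in> E"
  shows "(\<Sum>e'\<in>E. d e' * cinner s e' e) = d e"
proof -
  have "(\<Sum>e'\<in>E. d e' * cinner s e' e) = (\<Sum>e'\<in>E. if e' = e then d e' else 0)"
    using assms(2,3) unfolding orthonormal_def by (intro sum.cong) auto
  also have "\<dots> = d e" using assms(1,3) by simp
  finally show ?thesis .
qed

lemma cinner_residual_orth:
  assumes "finite E" "orthonormal s E" "e \<in> E"
  shows "cinner s (\<lambda>k. x k - orth_proj s E x k) e = 0"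
proof -
  have "cinner s (orth_proj s E x) e = cinner s x e"
    using cinner_orth_proj[OF assms(1)] orthonormal_sum_cinner[OF assms, of "cinner s x"] by simp
  then show ?thesis by (simp add: cinner_diff_left)
qed

lemma sqnorm_pythagoras:
  assumes fin: "finite E" and on: "orthonormal s E"
  shows "sqnorm s x = sqnorm s (\<lambda>k. x k - orth_proj s E x k) + (\<Sum>e\<in>E. (cmod (cinner s x e))\<^sup>2)"
proof -
  define y where "y = (\<lambda>k. x k - orth_proj s E x k)"
  have y_orth: "cinner s e y = 0" if "e \<in> E" for e
    using cinner_residual_orth[OF fin on that, of x] cinner_commute[of s e y] by (simp add: y_def)
  have "cinner s y (orth_proj s E x) = cnj (\<Sum>e\<in>E. cinner s x e * cinner s e y)"
    by (simp add: cinner_commute[of s y] cinner_orth_proj fin)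
  also have "\<dots> = 0" using y_orth by simp
  finally have y_proj: "cinner s y (orth_proj s E x) = 0" .
  have "cinner s x x = cinner s y x + cinner s (orth_proj s E x) x"
    by (simp add: y_def cinner_diff_left)
  also have "cinner s y x = cinner s y y"
    using y_proj cinner_diff_right[of s y x "orth_proj s E x"] by (simp add: y_def)
  also have "cinner s (orth_proj s E x) x = (\<Sum>e\<in>E. of_real ((cmod (cinner s x e))\<^sup>2))"
    unfolding cinner_orth_proj[OF fin] by (intro sum.cong refl) (metis cinner_commute complex_norm_square)
  finally have "cinner s x x = of_real (sqnorm s y + (\<Sum>e\<in>E. (cmod (cinner s x e))\<^sup>2))"
    by (simp add: cinner_self)
  then show ?thesis by (simp only: cinner_self of_real_eq_iff y_def)
qed

lemma bessel_inequality:
  "finite E \<Longrightarrow> orthonormal s E \<Longrightarrow> (\<Sum>e\<in>E. (cmod (cinner s x e))\<^sup>2) \<le> sqnorm s x"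
  using sqnorm_pythagoras[of E s x] sqnorm_nonneg[of s "\<lambda>k. x k - orth_proj s E x k"] by linarith

lemma parseval_identity:
  assumes "finite E" "orthonormal s E" "expands s E x"
  shows "sqnorm s x = (\<Sum>e\<in>E. (cmod (cinner s x e))\<^sup>2)"
proof -
  have "sqnorm s (\<lambda>k. x k - orth_proj s E x k) = 0"
    using assms(3) by (simp add: sqnorm_eq_0_iff expands_def)
  then show ?thesis using sqnorm_pythagoras[OF assms(1,2), of x] by simp
qed

lemma orthonormal_sqnorm: "orthonormal s E \<Longrightarrow> e \<in> E \<Longrightarrow> sqnorm s e = 1"
  unfolding orthonormal_def by (metis cinner_self of_real_eq_1_iff)

lemma orthonormal_Un:
  assumes E: "orthonormal s E" and F: "orthonormal s F" and EF: "E \<subseteq> orth_compl s F"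
  shows "orthonormal s (E \<union> F)"
proof -
  have cross: "cinner s f e = 0" "cinner s e f = 0" "e \<noteq> f" if "e \<in> E" "f \<in> F" for e f
  proof -
    show fe: "cinner s f e = 0" using EF that by (auto simp: orth_compl_def)
    then show "cinner s e f = 0" by (simp add: cinner_commute[of s e f])
    show "e \<noteq> f" using fe E that by (auto simp: orthonormal_def)
  qed
  show ?thesis
    using E F unfolding orthonormal_def by (auto dest: cross)
qed

lemma card_orthonormal_le:
  assumes fin: "finite E" and on: "orthonormal s E"
  shows "card E \<le> s"
proof -
  define u where "u k = (\<lambda>i. if i = k then 1 else 0 :: complex)" for k :: nat
  have cinner_u: "cinner s (u k) e = cnj (e k)" if "k < s" for k e
  proof -
    have "cinner s (u k) e = (\<Sum>i<s. if i = k then cnj (e i) else 0)"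
      unfolding cinner_def u_def by (intro sum.cong) auto
    then show ?thesis using that by simp
  qed
  have "real (card E) = (\<Sum>e\<in>E. sqnorm s e)"
    using orthonormal_sqnorm[OF on] by simp
  also have "\<dots> = (\<Sum>k<s. \<Sum>e\<in>E. (cmod (cinner s (u k) e))\<^sup>2)"
    unfolding sqnorm_def by (subst sum.swap) (simp add: cinner_u)
  also have "\<dots> \<le> (\<Sum>k<s. sqnorm s (u k))"
    by (intro sum_mono bessel_inequality fin on)
  also have "\<dots> = (\<Sum>k<s. 1)"
    by (intro sum.cong refl) (metis cinner_self cinner_u complex_cnj_one lessThan_iff of_real_eq_1_iff u_def)
  finally show ?thesis by simp
qed

lemma expands_mono:
  assumes "finite E'" "orthonormal s E'" "E \<subseteq> E'" "expands s E x"
  shows "expands s E' x"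
proof -
  have "cinner s x e = 0" if "e \<in> E' - E" for e
  proof -
    have "cinner s x e = cinner s (orth_proj s E x) e"
      using assms(4) unfolding expands_def by (intro cinner_cong) auto
    also have "\<dots> = (\<Sum>e'\<in>E. cinner s x e' * cinner s e' e)"
      using assms(1,3) finite_subset by (blast intro: cinner_orth_proj)
    also have "\<dots> = 0"
    proof (intro sum.neutral ballI)
      fix e' assume "e' \<in> E"
      then have "e' \<noteq> e" "e' \<in> E'" using that assms(3) by auto
      then show "cinner s x e' * cinner s e' e = 0"
        using assms(2) that unfolding orthonormal_def by auto
    qed
    finally show ?thesis .
  qed
  then have "orth_proj s E' x = orth_proj s E x"
    unfolding orth_proj_def using assms(1,3) by (intro ext sum.mono_neutral_right) auto
  then show ?thesis using assms(4) by (simp add: expands_def)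
qed

lemma orth_compl_insert: "orth_compl s (insert x X) = {v. cinner s x v = 0} \<inter> orth_compl s X"
  unfolding orth_compl_def by auto

lemma orthonormal_insert_normalized:
  assumes on: "orthonormal s E"
    and y_orth: "\<forall>e\<in>E. cinner s y e = 0" and y_nz: "sqnorm s y \<noteq> 0"
    and n_def: "n = sqrt (sqnorm s y)" and e0_def: "e0 = (\<lambda>k. y k / complex_of_real n)"
  shows "orthonormal s (insert e0 E)" "e0 \<notin> E" "cinner s y e0 = complex_of_real n"
    "cinner s e0 v = cinner s y v / complex_of_real n" "0 < n"
proof -
  show n_pos: "0 < n" using y_nz sqnorm_nonneg[of s y] by (simp add: n_def)
  have yy: "cinner s y y = complex_of_real n * complex_of_real n"
    using sqnorm_nonneg[of s y] by (simp add: cinner_self n_def flip: of_real_mult)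
  show "cinner s e0 v = cinner s y v / complex_of_real n" for v
    by (simp add: e0_def cinner_divide_left)
  show "cinner s y e0 = complex_of_real n"
    using n_pos by (simp add: e0_def cinner_divide_right_real yy)
  have e0e0: "cinner s e0 e0 = 1"
    using n_pos by (simp add: e0_def cinner_divide_left cinner_divide_right_real yy)
  have e0e: "cinner s e0 e = 0" "cinner s e e0 = 0" if "e \<in> E" for e
    using y_orth that cinner_commute[of s e y]
    by (simp_all add: e0_def cinner_divide_left cinner_divide_right_real)
  show e0_notin: "e0 \<notin> E" using e0e e0e0 by force
  show "orthonormal s (insert e0 E)"
    using on e0e0 e0e e0_notin unfolding orthonormal_def by auto
qed

lemma gram_schmidt_step:
  assumes fin: "finite E" and on: "orthonormal s E"
  obtains E' where "finite E'" "orthonormal s E'" "E \<subseteq> E'" "expands s E' x"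
    "orth_compl s (insert x E) \<subseteq> orth_compl s E'"
proof (cases "sqnorm s (\<lambda>k. x k - orth_proj s E x k) = 0")
  case True
  then have "expands s E x" by (simp add: sqnorm_eq_0_iff expands_def)
  then show ?thesis using that[of E] fin on by (auto simp: orth_compl_def)
next
  case False
  define y where "y = (\<lambda>k. x k - orth_proj s E x k)"
  define n where "n = sqrt (sqnorm s y)"
  define e0 where "e0 = (\<lambda>k. y k / complex_of_real n)"
  have "\<forall>e\<in>E. cinner s y e = 0" using cinner_residual_orth[OF fin on] by (simp add: y_def)
  note e0 = orthonormal_insert_normalized[OF on this False[folded y_def] n_def e0_def]
  have "cinner s e e0 = 0" if "e \<in> E" for e
    using e0(1,2) that unfolding orthonormal_def by force
  then have "cinner s (orth_proj s E x) e0 = 0" by (simp add: cinner_orth_proj fin)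
  moreover have "cinner s x e0 = cinner s y e0 + cinner s (orth_proj s E x) e0"
    by (simp add: y_def cinner_diff_left)
  ultimately have "cinner s x e0 = complex_of_real n" using e0(3) by simp
  then have "orth_proj s (insert e0 E) x k = y k + orth_proj s E x k" for k
    using fin e0(2,5) by (simp add: orth_proj_def e0_def)
  then have "expands s (insert e0 E) x" by (simp add: expands_def y_def)
  moreover have "orth_compl s (insert x E) \<subseteq> orth_compl s (insert e0 E)"
  proof
    fix v assume v: "v \<in> orth_compl s (insert x E)"
    then have "cinner s (orth_proj s E x) v = 0"
      by (simp add: orth_compl_def cinner_orth_proj fin)
    then have "cinner s y v = 0" using v by (simp add: orth_compl_def y_def cinner_diff_left)
    then show "v \<in> orth_compl s (insert e0 E)" using v e0(4) by (simp add: orth_compl_def)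
  qed
  ultimately show ?thesis using that[of "insert e0 E"] fin e0(1) by blast
qed

(* The last conclusion says that E lies in the span of X. *)
lemma gram_schmidt:
  assumes "finite X"
  obtains E where "finite E" "orthonormal s E" "\<forall>x\<in>X. expands s E x"
    "orth_compl s X \<subseteq> orth_compl s E"
proof -
  have "\<exists>E. finite E \<and> orthonormal s E \<and> (\<forall>x\<in>X. expands s E x) \<and> orth_compl s X \<subseteq> orth_compl s E"
    using assms
  proof (induction X rule: finite_induct)
    case empty
    show ?case by (rule exI[of _ "{}"]) (simp add: orthonormal_def orth_compl_def)
  next
    case (insert x X)
    then obtain E where E: "finite E" "orthonormal s E" "\<forall>x\<in>X. expands s E x"
      "orth_compl s X \<subseteq> orth_compl s E" by blast
    obtain E' where E': "finite E'" "orthonormal s E'" "E \<subseteq> E'" "expands s E' x"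
      "orth_compl s (insert x E) \<subseteq> orth_compl s E'"
      using gram_schmidt_step[OF E(1,2)] .
    have "\<forall>y\<in>insert x X. expands s E' y"
      using E(3) E'(1-4) expands_mono by blast
    moreover have "orth_compl s (insert x X) \<subseteq> orth_compl s E'"
      using E(4) E'(5) unfolding orth_compl_insert by blast
    ultimately show ?case using E'(1,2) by blast
  qed
  then show ?thesis using that by blast
qed

section \<open>Contractions and the Frobenius norm\<close>

definition row_comb :: "nat \<Rightarrow> (nat \<Rightarrow> nat \<Rightarrow> complex) \<Rightarrow> (nat \<Rightarrow> complex) \<Rightarrow> nat \<Rightarrow> complex" where
  "row_comb s X c = (\<lambda>k. \<Sum>j<s. c j * X j k)"

(* X is contractive iff X X^* <= I. *)
definition contractive :: "nat \<Rightarrow> (nat \<Rightarrow> nat \<Rightarrow> complex) \<Rightarrow> bool" where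
  "contractive s X \<longleftrightarrow> (\<forall>c. sqnorm s (row_comb s X c) \<le> sqnorm s c)"

lemma mul_adj_eq_cinner: "mul_adj s X Y j l = cinner s (X j) (Y l)"
  unfolding mul_adj_def cinner_def ..

lemma frob_sq_eq_sum_sqnorm: "frob_sq s X = (\<Sum>j<s. sqnorm s (X j))"
  unfolding frob_sq_def sqnorm_def ..

lemma frob_sq_eq_0_iff: "frob_sq s X = 0 \<longleftrightarrow> (\<forall>j<s. \<forall>k<s. X j k = 0)"
  unfolding frob_sq_eq_sum_sqnorm by (auto simp: sum_nonneg_eq_0_iff sqnorm_nonneg sqnorm_eq_0_iff)

lemma sqnorm_row_comb:
  "of_real (sqnorm s (row_comb s X c)) = (\<Sum>j<s. \<Sum>l<s. c j * cnj (c l) * mul_adj s X X j l)"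
proof -
  have "of_real (sqnorm s (row_comb s X c)) = (\<Sum>k<s. \<Sum>j<s. \<Sum>l<s. (c j * X j k) * cnj (c l * X l k))"
    unfolding cinner_self[symmetric] row_comb_def cinner_def by (simp add: sum_product)
  also have "\<dots> = (\<Sum>j<s. \<Sum>l<s. \<Sum>k<s. (c j * X j k) * cnj (c l * X l k))"
    by (subst sum.swap, rule sum.cong[OF refl], rule sum.swap)
  also have "\<dots> = (\<Sum>j<s. \<Sum>l<s. c j * cnj (c l) * mul_adj s X X j l)"
    unfolding mul_adj_def by (simp add: sum_distrib_left mult_ac)
  finally show ?thesis .
qed

lemma contractive_block:
  fixes A :: "nat \<Rightarrow> nat \<Rightarrow> nat \<Rightarrow> complex"
  assumes I: "\<forall>j<s. \<forall>l<s. (\<Sum>i=1..d. mul_adj s (A i) (A i) j l) = (if j = l then 1 else 0)"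
    and i0: "i0 \<in> {1..d}"
  shows "contractive s (A i0)"
  unfolding contractive_def
proof
  fix c
  have "of_real (\<Sum>i=1..d. sqnorm s (row_comb s (A i) c))
      = (\<Sum>i=1..d. \<Sum>j<s. \<Sum>l<s. c j * cnj (c l) * mul_adj s (A i) (A i) j l)"
    by (simp only: of_real_sum sqnorm_row_comb)
  also have "\<dots> = (\<Sum>j<s. \<Sum>l<s. c j * cnj (c l) * (\<Sum>i=1..d. mul_adj s (A i) (A i) j l))"
    by (simp only: sum_distrib_left sum.swap[of _ "{1..d}"])
  also have "\<dots> = (\<Sum>j<s. \<Sum>l<s. if j = l then c j * cnj (c l) else 0)"
    using I by (intro sum.cong refl) simp
  also have "\<dots> = of_real (sqnorm s c)"
    by (simp add: sqnorm_def of_real_sum complex_norm_square flip: of_real_power)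
  finally have "(\<Sum>i=1..d. sqnorm s (row_comb s (A i) c)) = sqnorm s c"
    by (simp only: of_real_eq_iff)
  moreover have "sqnorm s (row_comb s (A i0) c) \<le> (\<Sum>i=1..d. sqnorm s (row_comb s (A i) c))"
    using i0 by (intro member_le_sum) (auto simp: sqnorm_nonneg)
  ultimately show "sqnorm s (row_comb s (A i0) c) \<le> sqnorm s c" by simp
qed

lemma contractive_sum_cinner_le:
  assumes X: "contractive s X" and e: "sqnorm s e = 1"
  shows "(\<Sum>j<s. (cmod (cinner s (X j) e))\<^sup>2) \<le> 1"
proof -
  define c where "c j = cnj (cinner s (X j) e)" for j
  define t where "t = sqnorm s c"
  \<comment> \<open>Cauchy-Schwarz against e and contractivity at c give t^2 <= t.\<close>
  have t_eq: "t = (\<Sum>j<s. (cmod (cinner s (X j) e))\<^sup>2)"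
    by (simp add: t_def sqnorm_def c_def)
  have "cinner s (row_comb s X c) e = (\<Sum>j<s. c j * cinner s (X j) e)"
    unfolding row_comb_def by (rule cinner_sum_left) simp
  also have "\<dots> = of_real t"
    by (simp add: t_eq c_def of_real_sum complex_norm_square mult.commute flip: of_real_power)
  finally have "t\<^sup>2 = (cmod (cinner s (row_comb s X c) e))\<^sup>2"
    using sqnorm_nonneg[of s c] by (simp add: t_def)
  also have "\<dots> \<le> sqnorm s (row_comb s X c)"
  proof -
    have "orthonormal s {e}" using e by (simp add: orthonormal_def cinner_self)
    then show ?thesis using bessel_inequality[of "{e}" s] by simp
  qed
  also have "\<dots> \<le> t" using X by (simp add: contractive_def t_def)
  finally have "t\<^sup>2 \<le> t" .
  moreover have "0 \<le> t" by (simp add: t_def sqnorm_nonneg)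
  ultimately have "t \<le> 1"
    using mult_le_cancel_left1[of t t] by (auto simp: power2_eq_square)
  then show ?thesis by (simp add: t_eq)
qed

lemma frob_sq_le_card:
  assumes X: "contractive s X" and fin: "finite E" and on: "orthonormal s E"
    and exp: "\<forall>j<s. expands s E (X j)"
  shows "frob_sq s X \<le> card E"
proof -
  have "frob_sq s X = (\<Sum>j<s. \<Sum>e\<in>E. (cmod (cinner s (X j) e))\<^sup>2)"
    unfolding frob_sq_eq_sum_sqnorm using exp by (intro sum.cong refl parseval_identity fin on) auto
  also have "\<dots> = (\<Sum>e\<in>E. \<Sum>j<s. (cmod (cinner s (X j) e))\<^sup>2)"
    by (rule sum.swap)
  also have "\<dots> \<le> (\<Sum>e\<in>E. 1)"
    by (intro sum_mono contractive_sum_cinner_le X orthonormal_sqnorm[OF on])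
  finally show ?thesis by simp
qed

lemma ceiling_frob_sq_add_le:
  assumes X: "contractive s X" and Y: "contractive s Y"
    and XY: "\<forall>j<s. \<forall>l<s. mul_adj s X Y j l = 0"
  shows "\<lceil>frob_sq s X\<rceil> + \<lceil>frob_sq s Y\<rceil> \<le> int s"
proof -
  obtain E where E: "finite E" "orthonormal s E" "\<forall>x\<in>X ` {..<s}. expands s E x"
    "orth_compl s (X ` {..<s}) \<subseteq> orth_compl s E"
    using gram_schmidt[of "X ` {..<s}"] by blast
  obtain F where F: "finite F" "orthonormal s F" "\<forall>y\<in>Y ` {..<s}. expands s F y"
    "orth_compl s (Y ` {..<s}) \<subseteq> orth_compl s F"
    using gram_schmidt[of "Y ` {..<s}"] by blast
  have "Y ` {..<s} \<subseteq> orth_compl s (X ` {..<s})"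
    using XY by (auto simp: orth_compl_def mul_adj_eq_cinner)
  then have "Y ` {..<s} \<subseteq> orth_compl s E" using E(4) by blast
  then have "E \<subseteq> orth_compl s (Y ` {..<s})"
    by (auto simp: orth_compl_def cinner_commute[of s "Y _"])
  then have EF: "E \<subseteq> orth_compl s F" using F(4) by blast
  have "cinner s e e = 0" if "e \<in> E" "e \<in> F" for e
    using that EF unfolding orth_compl_def by blast
  then have "E \<inter> F = {}" using F(2) unfolding orthonormal_def by fastforce
  then have "card E + card F \<le> s"
    using card_orthonormal_le[OF _ orthonormal_Un[OF E(2) F(2) EF]] E(1) F(1)
    by (simp add: card_Un_disjoint)
  moreover have "\<lceil>frob_sq s X\<rceil> \<le> int (card E)"
    using frob_sq_le_card[OF X E(1,2)] E(3) by (simp add: ceiling_le_iff)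
  moreover have "\<lceil>frob_sq s Y\<rceil> \<le> int (card F)"
    using frob_sq_le_card[OF Y F(1,2)] F(3) by (simp add: ceiling_le_iff)
  ultimately show ?thesis by linarith
qed

lemma mul_adj_eq_0_if_frob_sq_eq_0:
  "frob_sq s X = 0 \<or> frob_sq s Y = 0 \<Longrightarrow> j < s \<Longrightarrow> l < s \<Longrightarrow> mul_adj s X Y j l = 0"
  unfolding frob_sq_eq_0_iff mul_adj_def by auto

lemma Brac_ceiling_le:
  assumes ab: "(\<alpha>, \<beta>) \<in> Brac d s" and i0: "i0 \<in> {1..d}"
    and zero: "\<forall>i\<in>{1..d} - {i0}. \<alpha> i = 0 \<or> \<beta> i = 0"
  shows "\<lceil>\<alpha> i0 * real s\<rceil> + \<lceil>\<beta> i0 * real s\<rceil> \<le> int s"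
proof -
  obtain A B :: "nat \<Rightarrow> nat \<Rightarrow> nat \<Rightarrow> complex" where
    IA: "\<forall>j<s. \<forall>l<s. (\<Sum>i=1..d. mul_adj s (A i) (A i) j l) = (if j = l then 1 else 0)" and
    IB: "\<forall>j<s. \<forall>l<s. (\<Sum>i=1..d. mul_adj s (B i) (B i) j l) = (if j = l then 1 else 0)" and
    IAB: "\<forall>j<s. \<forall>l<s. (\<Sum>i=1..d. mul_adj s (A i) (B i) j l) = 0" and
    fr: "\<forall>i\<in>{1..d}. frob_sq s (A i) / real s = \<alpha> i \<and> frob_sq s (B i) / real s = \<beta> i"
    using ab unfolding Brac_def by auto
  have frob_mult: "frob_sq s (A i) = \<alpha> i * real s" "frob_sq s (B i) = \<beta> i * real s"
    if "i \<in> {1..d}" for i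
    using fr that by (cases "s = 0"; force simp: frob_sq_def field_simps)+
  have "mul_adj s (A i0) (B i0) j l = 0" if "j < s" "l < s" for j l
  proof -
    have "frob_sq s (A i) = 0 \<or> frob_sq s (B i) = 0" if "i \<in> {1..d} - {i0}" for i
      using that zero fr frob_mult by fastforce
    then have "(\<Sum>i\<in>{1..d} - {i0}. mul_adj s (A i) (B i) j l) = 0"
      using \<open>j < s\<close> \<open>l < s\<close> by (intro sum.neutral ballI mul_adj_eq_0_if_frob_sq_eq_0) auto
    moreover have "(\<Sum>i=1..d. mul_adj s (A i) (B i) j l)
        = mul_adj s (A i0) (B i0) j l + (\<Sum>i\<in>{1..d} - {i0}. mul_adj s (A i) (B i) j l)"
      using i0 by (intro sum.remove) auto
    ultimately show ?thesis using IAB that by simp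
  qed
  then have "\<lceil>frob_sq s (A i0)\<rceil> + \<lceil>frob_sq s (B i0)\<rceil> \<le> int s"
    by (intro ceiling_frob_sq_add_le contractive_block[OF IA i0] contractive_block[OF IB i0]) auto
  then show ?thesis using i0 frob_mult by simp
qed

section \<open>Diagonal witnesses\<close>

definition diag_mat :: "(nat \<Rightarrow> real) \<Rightarrow> nat \<Rightarrow> nat \<Rightarrow> complex" where
  "diag_mat u = (\<lambda>j k. if j = k then complex_of_real (u j) else 0)"

lemma mul_adj_diag_mat:
  assumes "j < s"
  shows "mul_adj s (diag_mat u) (diag_mat v) j l = (if j = l then complex_of_real (u j * v j) else 0)"
proof -
  have "mul_adj s (diag_mat u) (diag_mat v) j l
      = (\<Sum>k<s. if k = j then (if j = l then complex_of_real (u j * v j) else 0) else 0)"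
    unfolding mul_adj_def diag_mat_def by (intro sum.cong) auto
  then show ?thesis using assms by simp
qed

lemma frob_sq_diag_mat: "frob_sq s (diag_mat u) = (\<Sum>j<s. (u j)\<^sup>2)"
proof -
  have "frob_sq s (diag_mat u) = (\<Sum>j<s. \<Sum>k<s. if k = j then (u j)\<^sup>2 else 0)"
    unfolding frob_sq_def diag_mat_def by (intro sum.cong) auto
  then show ?thesis by simp
qed

lemma atLeastAtMost_1_3: "{1..3::nat} = {1, 2, 3}"
  by auto

lemma vec3_in_simplex: "vec3 a b c \<in> simplex 3 \<longleftrightarrow> 0 \<le> a \<and> 0 \<le> b \<and> 0 \<le> c \<and> a + b + c = 1"
  unfolding simplex_def atLeastAtMost_1_3 by (simp add: vec3_def add.assoc)

lemma simplex_3_eq: "simplex 3 = {vec3 a b c | a b c. 0 \<le> a \<and> 0 \<le> b \<and> 0 \<le> c \<and> a + b + c = 1}"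
proof (intro equalityI subsetI)
  fix \<alpha> assume \<alpha>: "\<alpha> \<in> simplex 3"
  then have "\<alpha> = vec3 (\<alpha> 1) (\<alpha> 2) (\<alpha> 3)"
    unfolding simplex_def vec3_def by (force simp: fun_eq_iff)
  with \<alpha> show "\<alpha> \<in> {vec3 a b c | a b c. 0 \<le> a \<and> 0 \<le> b \<and> 0 \<le> c \<and> a + b + c = 1}"
    by (metis (mono_tags, lifting) mem_Collect_eq vec3_in_simplex)
qed (auto simp: vec3_in_simplex)

lemma diag_profiles_in_Brac3:
  fixes u v :: "nat \<Rightarrow> real"
  assumes s: "0 < s" and u: "\<forall>j. 0 \<le> u j \<and> u j \<le> 1" and v: "\<forall>j. 0 \<le> v j \<and> v j \<le> 1"
    and uv: "\<forall>j. u j * v j = 0" and ab: "a \<in> {0..1}" "b \<in> {0..1}"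
    and a: "(\<Sum>j<s. u j) = a * real s" and b: "(\<Sum>j<s. v j) = b * real s"
  shows "(vec3 a (1 - a) 0, vec3 b 0 (1 - b)) \<in> Brac 3 s"
proof -
  define A where "A i = (if i = 1 then diag_mat (\<lambda>j. sqrt (u j))
    else if i = 2 then diag_mat (\<lambda>j. sqrt (1 - u j)) else diag_mat (\<lambda>_. 0))" for i :: nat
  define B where "B i = (if i = 1 then diag_mat (\<lambda>j. sqrt (v j))
    else if i = 3 then diag_mat (\<lambda>j. sqrt (1 - v j)) else diag_mat (\<lambda>_. 0))" for i :: nat
  have "\<forall>j<s. \<forall>l<s. (\<Sum>i=1..3. mul_adj s (A i) (A i) j l) = (if j = l then 1 else 0)"
    using u unfolding atLeastAtMost_1_3 A_def by (simp add: mul_adj_diag_mat flip: of_real_add)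
  moreover have "\<forall>j<s. \<forall>l<s. (\<Sum>i=1..3. mul_adj s (B i) (B i) j l) = (if j = l then 1 else 0)"
    using v unfolding atLeastAtMost_1_3 B_def by (simp add: mul_adj_diag_mat flip: of_real_add)
  moreover have "\<forall>j<s. \<forall>l<s. (\<Sum>i=1..3. mul_adj s (A i) (B i) j l) = 0"
    using u v uv unfolding atLeastAtMost_1_3 A_def B_def
    by (simp add: mul_adj_diag_mat flip: real_sqrt_mult)
  moreover have "\<forall>i\<in>{1..3}. frob_sq s (A i) / real s = vec3 a (1 - a) 0 i
      \<and> frob_sq s (B i) / real s = vec3 b 0 (1 - b) i"
  proof -
    have "frob_sq s (A 1) = a * real s" "frob_sq s (A 2) = real s - a * real s"
      "frob_sq s (B 1) = b * real s" "frob_sq s (B 3) = real s - b * real s"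
      using u v a b by (simp_all add: A_def B_def frob_sq_diag_mat sum_subtractf)
    moreover have "frob_sq s (A 3) = 0" "frob_sq s (B 2) = 0"
      by (simp_all add: A_def B_def frob_sq_diag_mat)
    ultimately show ?thesis
      using s by (auto simp: vec3_def field_simps numeral_3_eq_3 le_Suc_eq)
  qed
  moreover have "vec3 a (1 - a) 0 \<in> simplex 3" "vec3 b 0 (1 - b) \<in> simplex 3"
    using ab by (simp_all add: vec3_in_simplex)
  ultimately show ?thesis unfolding Brac_def by blast
qed

lemma sum_block_const:
  "m + p \<le> s \<Longrightarrow> (\<Sum>j<s. if m \<le> j \<and> j < m + p then c else 0) = of_nat p * c"
proof -
  assume "m + p \<le> s"
  then have "{..<s} \<inter> {j. m \<le> j \<and> j < m + p} = {m..<m + p}" by auto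
  moreover have "(\<Sum>j<s. if m \<le> j \<and> j < m + p then c else 0)
      = (\<Sum>j\<in>{..<s} \<inter> {j. m \<le> j \<and> j < m + p}. c)"
    by (subst sum.inter_restrict) auto
  ultimately show ?thesis by simp
qed

(* For a = 0 the divisor is 0, and both sides of the first equation are 0. *)
lemma nat_ceiling_mult_divide:
  fixes a :: real
  assumes "0 \<le> a"
  shows "real (nat \<lceil>a\<rceil>) * (a / real (nat \<lceil>a\<rceil>)) = a" "a / real (nat \<lceil>a\<rceil>) \<le> 1"
proof -
  have "a \<le> real (nat \<lceil>a\<rceil>)" by linarith
  then show "a / real (nat \<lceil>a\<rceil>) \<le> 1" by (auto simp: divide_le_eq_1)
  show "real (nat \<lceil>a\<rceil>) * (a / real (nat \<lceil>a\<rceil>)) = a"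
  proof (cases "nat \<lceil>a\<rceil> = 0")
    case True
    with assms \<open>a \<le> real (nat \<lceil>a\<rceil>)\<close> show ?thesis by simp
  qed (simp, linarith)
qed

lemma block_profiles:
  fixes a b :: real
  assumes a: "0 \<le> a" and b: "0 \<le> b" and ab: "\<lceil>a\<rceil> + \<lceil>b\<rceil> \<le> int s"
  obtains u v :: "nat \<Rightarrow> real" where "\<forall>j. 0 \<le> u j \<and> u j \<le> 1" "\<forall>j. 0 \<le> v j \<and> v j \<le> 1"
    "\<forall>j. u j * v j = 0" "(\<Sum>j<s. u j) = a" "(\<Sum>j<s. v j) = b"
proof -
  define p where "p = nat \<lceil>a\<rceil>"
  define q where "q = nat \<lceil>b\<rceil>"
  define u where "u j = (if j < p then a / p else 0)" for j :: nat
  define v where "v j = (if p \<le> j \<and> j < p + q then b / q else 0)" for j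
  have pq: "p + q \<le> s" using ab a b unfolding p_def q_def by linarith
  have p: "real p * (a / real p) = a" "a / real p \<le> 1"
    using nat_ceiling_mult_divide[OF a] unfolding p_def by auto
  have q: "real q * (b / real q) = b" "b / real q \<le> 1"
    using nat_ceiling_mult_divide[OF b] unfolding q_def by auto
  have "(\<Sum>j<s. u j) = real p * (a / real p)"
    using sum_block_const[of 0 p s "a / real p"] pq unfolding u_def by simp
  then have "(\<Sum>j<s. u j) = a" using p(1) by simp
  moreover have "(\<Sum>j<s. v j) = real q * (b / real q)"
    using sum_block_const[of p q s "b / real q"] pq unfolding v_def by simp
  then have "(\<Sum>j<s. v j) = b" using q(1) by simp
  moreover have "\<forall>j. 0 \<le> u j \<and> u j \<le> 1" "\<forall>j. 0 \<le> v j \<and> v j \<le> 1"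
    using a b p(2) q(2) by (simp_all add: u_def v_def)
  moreover have "\<forall>j. u j * v j = 0" by (simp add: u_def v_def)
  ultimately show ?thesis using that by blast
qed

lemma vec3_pair_in_Brac3:
  assumes "0 < s" "a \<in> {0..1}" "b \<in> {0..1}" "\<lceil>a * real s\<rceil> + \<lceil>b * real s\<rceil> \<le> int s"
  shows "(vec3 a (1 - a) 0, vec3 b 0 (1 - b)) \<in> Brac 3 s"
proof -
  obtain u v where "\<forall>j. 0 \<le> u j \<and> u j \<le> 1" "\<forall>j. 0 \<le> v j \<and> v j \<le> 1" "\<forall>j. u j * v j = 0"
    "(\<Sum>j<s. u j) = a * real s" "(\<Sum>j<s. v j) = b * real s"
    using block_profiles[OF _ _ assms(4)] assms(2,3) by auto
  then show ?thesis using assms(1-3) by (intro diag_profiles_in_Brac3)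
qed

theorem proposition3p10:
  fixes s :: nat
  assumes "s \<ge> 1"
  shows "Brac 3 s \<inter> {(\<alpha>, \<beta>). \<alpha> \<in> simplex 3 \<and> \<beta> \<in> simplex 3 \<and> \<alpha> 3 = 0 \<and> \<beta> 2 = 0} =
         {(vec3 a1 (1 - a1) 0, vec3 b1 0 (1 - b1)) | a1 b1.
            a1 \<in> {0..1} \<and> b1 \<in> {0..1} \<and> \<lceil>a1 * real s\<rceil> + \<lceil>b1 * real s\<rceil> \<le> int s}"
proof (intro equalityI subsetI)
  fix z assume z: "z \<in> Brac 3 s \<inter> {(\<alpha>, \<beta>). \<alpha> \<in> simplex 3 \<and> \<beta> \<in> simplex 3 \<and> \<alpha> 3 = 0 \<and> \<beta> 2 = 0}"
  then obtain \<alpha> \<beta> where z_eq: "z = (\<alpha>, \<beta>)" and ab: "(\<alpha>, \<beta>) \<in> Brac 3 s"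
    and \<alpha>: "\<alpha> \<in> simplex 3" "\<alpha> 3 = 0" and \<beta>: "\<beta> \<in> simplex 3" "\<beta> 2 = 0" by auto
  obtain x1 x2 x3 where "\<alpha> = vec3 x1 x2 x3" "0 \<le> x1" "0 \<le> x2" "x1 + x2 + x3 = 1"
    using \<alpha>(1) unfolding simplex_3_eq by blast
  with \<alpha>(2) have "\<alpha> = vec3 (\<alpha> 1) (1 - \<alpha> 1) 0" "\<alpha> 1 \<in> {0..1}" by (auto simp: vec3_def)
  moreover obtain y1 y2 y3 where "\<beta> = vec3 y1 y2 y3" "0 \<le> y1" "0 \<le> y3" "y1 + y2 + y3 = 1"
    using \<beta>(1) unfolding simplex_3_eq by blast
  with \<beta>(2) have "\<beta> = vec3 (\<beta> 1) 0 (1 - \<beta> 1)" "\<beta> 1 \<in> {0..1}" by (auto simp: vec3_def)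
  moreover have "\<lceil>\<alpha> 1 * real s\<rceil> + \<lceil>\<beta> 1 * real s\<rceil> \<le> int s"
    using \<alpha>(2) \<beta>(2) by (intro Brac_ceiling_le[OF ab]) (auto simp: numeral_eq_Suc le_Suc_eq)
  ultimately show "z \<in> {(vec3 a1 (1 - a1) 0, vec3 b1 0 (1 - b1)) | a1 b1.
      a1 \<in> {0..1} \<and> b1 \<in> {0..1} \<and> \<lceil>a1 * real s\<rceil> + \<lceil>b1 * real s\<rceil> \<le> int s}"
    unfolding z_eq by blast
next
  fix z assume "z \<in> {(vec3 a1 (1 - a1) 0, vec3 b1 0 (1 - b1)) | a1 b1.
      a1 \<in> {0..1} \<and> b1 \<in> {0..1} \<and> \<lceil>a1 * real s\<rceil> + \<lceil>b1 * real s\<rceil> \<le> int s}"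
  then obtain a1 b1 where z_eq: "z = (vec3 a1 (1 - a1) 0, vec3 b1 0 (1 - b1))"
    and a1: "a1 \<in> {0..1}" and b1: "b1 \<in> {0..1}"
    and ceil: "\<lceil>a1 * real s\<rceil> + \<lceil>b1 * real s\<rceil> \<le> int s" by blast
  have "z \<in> Brac 3 s" unfolding z_eq using assms a1 b1 ceil by (intro vec3_pair_in_Brac3) auto
  moreover have "vec3 a1 (1 - a1) 0 \<in> simplex 3" "vec3 b1 0 (1 - b1) \<in> simplex 3"
    using a1 b1 by (simp_all add: vec3_in_simplex)
  ultimately show "z \<in> Brac 3 s \<inter> {(\<alpha>, \<beta>). \<alpha> \<in> simplex 3 \<and> \<beta> \<in> simplex 3 \<and> \<alpha> 3 = 0 \<and> \<beta> 2 = 0}"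
    unfolding z_eq by (simp add: vec3_def)
qed

end
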